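(* Let $S,T\subseteq\mathbb{Z}_{>0}$ be finite and let $x$ be such that $T_{\ge x}\preceq S_{>x}$. Then $$T\triangleleft S=(T_{<x}\triangleleft S_{\le x})\sqcup(T_{\ge x}\triangleleft S_{>x}).$$
   Context: For a finite set $S\subseteq\mathbb{Z}_{>0}$, $S(i)$ is its $i$th smallest element, and $S_{<x},S_{\le x},S_{>x},S_{\ge x}$ denote the subsets of elements $<x$, $\le x$, $>x$, $\ge x$. For finite $S,T$, $T\triangleleft S$ is computed by going through $S$ from largest to smallest; each $s$ picks the largest element of $T$ less than $s$ not yet picked (if one exists); $T\triangleleft S$ is the set of picked elements. We write $T\preceq S$ ($S$ dominates $T$) if $|T|\ge|S|$ and $T(i)<S(i)$ for all $i\in[|S|]$. *)

theory Defs
  imports Main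
begin

text \<open>S(i): the i-th smallest element of a finite set (1-based, i.e. i \<in> {1..card S}).\<close>
definition ith :: "int set \<Rightarrow> nat \<Rightarrow> int" where
  "ith S i = sorted_list_of_set S ! (i - 1)"

fun pick :: "int set \<Rightarrow> int list \<Rightarrow> int set" where
  "pick T [] = {}"
| "pick T (s # ss) =
     (if {t \<in> T. t < s} = {} then pick T ss
      else (let m = Max {t \<in> T. t < s} in insert m (pick (T - {m}) ss)))"

definition tri :: "int set \<Rightarrow> int set \<Rightarrow> int set" (infix "\<triangleleft>" 60) where
  "T \<triangleleft> S = pick T (rev (sorted_list_of_set S))"

definition dominated :: "int set \<Rightarrow> int set \<Rightarrow> bool" (infix "\<preceq>" 50) where
  "T \<preceq> S \<longleftrightarrow> card T \<ge> card S \<and> (\<forall>i \<in> {1..card S}. ith T i < ith S i)"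

end

theory Submission
  imports Defs
begin

text \<open>Listing \<open>S\<close> in decreasing order, the elements of \<open>S\<close> above \<open>x\<close> are processed
first. The domination hypothesis yields a Hall-type condition: for every \<open>s \<in> S\<close> with
\<open>s > x\<close>, there are at least as many elements of \<open>T\<close> in \<open>[x, s)\<close> as there are elements of
\<open>S\<close> in \<open>(x, s]\<close>. Hence each greedy choice of this first phase is at least \<open>x\<close>, and the
phase runs exactly as it would on the elements of \<open>T\<close> that are at least \<open>x\<close>. The remaining
elements of \<open>S\<close>, all at most \<open>x\<close>, can only pick elements below \<open>x\<close>, none of which has been
used.\<close>

lemma sorted_wrt_less_filter_le_nth:
  fixes ys :: "'a::linorder list"
  assumes "sorted_wrt (<) ys" "k < length ys"
  shows "{y \<in> set ys. y \<le> ys ! k} = set (take (Suc k) ys)"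
proof (intro set_eqI iffI)
  fix y assume "y \<in> {y \<in> set ys. y \<le> ys ! k}"
  then obtain i where i: "i < length ys" "ys ! i = y" "y \<le> ys ! k"
    by (auto simp: in_set_conv_nth)
  have "i \<le> k"
  proof (rule ccontr)
    assume "\<not> i \<le> k"
    then have "ys ! k < ys ! i"
      using sorted_wrt_nth_less[OF assms(1)] i(1) by simp
    then show False
      using i by simp
  qed
  then show "y \<in> set (take (Suc k) ys)"
    using i by (auto simp: in_set_conv_nth)
next
  fix y assume "y \<in> set (take (Suc k) ys)"
  then obtain i where i: "i \<le> k" "ys ! i = y"
    using assms(2) by (auto simp: in_set_conv_nth less_Suc_eq_le)
  have "ys ! i \<le> ys ! k"
    using sorted_wrt_nth_less[OF assms(1), of i k] assms(2) i(1)
    by (cases "i = k") (auto simp: order.order_iff_strict)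
  then show "y \<in> {y \<in> set ys. y \<le> ys ! k}"
    using i assms(2) by auto
qed

lemma card_le_ith:
  assumes "finite S" "i \<in> {1..card S}"
  shows "card {s \<in> S. s \<le> ith S i} = i"
proof -
  let ?ys = "sorted_list_of_set S"
  have "i - 1 < length ?ys"
    using assms by auto
  then have "{s \<in> S. s \<le> ith S i} = set (take (Suc (i - 1)) ?ys)"
    using sorted_wrt_less_filter_le_nth[of ?ys "i - 1"] assms(1) by (simp add: ith_def)
  also have "Suc (i - 1) = i"
    using assms(2) by simp
  finally have "{s \<in> S. s \<le> ith S i} = set (take i ?ys)" .
  then show ?thesis
    using assms by (simp add: distinct_card)
qed

lemma ith_onto:
  assumes "finite S" "s \<in> S"
  obtains i where "i \<in> {1..card S}" "ith S i = s"
proof -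
  obtain j where "j < card S" "sorted_list_of_set S ! j = s"
    using assms by (metis in_set_conv_nth length_sorted_list_of_set set_sorted_list_of_set)
  then show ?thesis
    using that[of "Suc j"] by (simp add: ith_def)
qed

lemma dominated_card_le:
  assumes "finite S" "finite T" "T \<preceq> S" "s \<in> S"
  shows "card {s' \<in> S. s' \<le> s} \<le> card {t \<in> T. t < s}"
proof -
  obtain i where i: "i \<in> {1..card S}" "ith S i = s"
    using ith_onto assms(1,4) by blast
  have iT: "i \<in> {1..card T}" and lt: "ith T i < s"
    using assms(3) i by (auto simp: dominated_def)
  have "card {s' \<in> S. s' \<le> s} = i"
    using card_le_ith[OF assms(1) i(1)] i(2) by simp
  also have "\<dots> = card {t \<in> T. t \<le> ith T i}"
    using card_le_ith[OF assms(2) iT] by simp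
  also have "\<dots> \<le> card {t \<in> T. t < s}"
    using assms(2) lt by (intro card_mono) auto
  finally show ?thesis .
qed

lemma pick_subset: "finite Q \<Longrightarrow> pick Q L \<subseteq> Q"
proof (induction L arbitrary: Q)
  case Nil
  then show ?case by simp
next
  case (Cons s L)
  then show ?case
    using Max_in[of "{t \<in> Q. t < s}"] by (auto simp: Let_def)
qed

lemma pick_Cons_empty: "{t \<in> Q. t < s} = {} \<Longrightarrow> pick Q (s # L) = pick Q L"
  by simp

lemma pick_Cons_nonempty:
  "{t \<in> Q. t < s} \<noteq> {} \<Longrightarrow>
   pick Q (s # L) = insert (Max {t \<in> Q. t < s}) (pick (Q - {Max {t \<in> Q. t < s}}) L)"
  by (simp only: pick.simps Let_def if_False)

declare pick.simps(2) [simp del]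

lemma pick_append: "pick Q (L @ M) = pick Q L \<union> pick (Q - pick Q L) M"
proof (induction L arbitrary: Q)
  case Nil
  then show ?case by simp
next
  case (Cons s L)
  show ?case
  proof (cases "{t \<in> Q. t < s} = {}")
    case True
    then show ?thesis
      using Cons.IH by (simp add: pick_Cons_empty)
  next
    case False
    define m where "m = Max {t \<in> Q. t < s}"
    have "Q - {m} - pick (Q - {m}) L = Q - insert m (pick (Q - {m}) L)"
      by auto
    then show ?thesis
      using Cons.IH[of "Q - {m}"] pick_Cons_nonempty[OF False] by (simp add: m_def)
  qed
qed

lemma pick_restrict_below:
  "\<forall>s \<in> set L. s \<le> x \<Longrightarrow> pick Q L = pick {t \<in> Q. t < x} L"
proof (induction L arbitrary: Q)
  case Nil
  then show ?case by simp
next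
  case (Cons s L)
  have below: "{t \<in> {t \<in> Q. t < x}. t < s} = {t \<in> Q. t < s}"
    using Cons.prems by auto
  show ?case
  proof (cases "{t \<in> Q. t < s} = {}")
    case True
    then show ?thesis
      using Cons below by (simp add: pick_Cons_empty)
  next
    case False
    define m where "m = Max {t \<in> Q. t < s}"
    have "{t \<in> Q - {m}. t < x} = {t \<in> Q. t < x} - {m}"
      by auto
    then show ?thesis
      using Cons.IH[of "Q - {m}"] Cons.prems False below
      by (simp add: pick_Cons_nonempty m_def)
  qed
qed

definition hall_above :: "int \<Rightarrow> int set \<Rightarrow> int list \<Rightarrow> bool" where
  "hall_above x P L \<longleftrightarrow>
     (\<forall>s \<in> set L. card {s' \<in> set L. s' \<le> s} \<le> card {a \<in> P. x \<le> a \<and> a < s})"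

lemma hall_above_Cons_witness:
  assumes "hall_above x P (s # L)"
  obtains a where "a \<in> P" "x \<le> a" "a < s"
proof -
  have "card {s' \<in> set (s # L). s' \<le> s} \<le> card {a \<in> P. x \<le> a \<and> a < s}"
    using assms unfolding hall_above_def by simp
  moreover have "0 < card {s' \<in> set (s # L). s' \<le> s}"
    by (subst card_gt_0_iff) auto
  ultimately have "{a \<in> P. x \<le> a \<and> a < s} \<noteq> {}"
    by (metis card.empty not_less_zero le_zero_eq)
  then show ?thesis
    using that by blast
qed

lemma hall_above_remove_max:
  assumes sorted: "sorted_wrt (>) (s # L)" and "finite P" and hall: "hall_above x P (s # L)"
    and m: "m \<in> P" "x \<le> m" "m < s" and max: "\<forall>t \<in> P. t < s \<longrightarrow> t \<le> m"
  shows "hall_above x (P - {m}) L"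
  unfolding hall_above_def
proof
  have hall_at: "card {s'' \<in> set (s # L). s'' \<le> s'} \<le> card {a \<in> P. x \<le> a \<and> a < s'}"
    if "s' \<in> set (s # L)" for s'
    using hall that unfolding hall_above_def by blast
  fix s' assume s': "s' \<in> set L"
  then have "s' < s"
    using sorted by simp
  show "card {s'' \<in> set L. s'' \<le> s'} \<le> card {a \<in> P - {m}. x \<le> a \<and> a < s'}"
  proof (cases "m < s'")
    case True
    have "s \<notin> set L"
      using sorted by auto
    then have "card {s'' \<in> set L. s'' \<le> s'} < card (insert s (set L))"
      by (simp add: le_imp_less_Suc card_mono)
    also have "insert s (set L) = {s'' \<in> set (s # L). s'' \<le> s}"
      using sorted by auto
    also have "card \<dots> \<le> card {a \<in> P. x \<le> a \<and> a < s}"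
      by (rule hall_at) simp
    finally have "card {s'' \<in> set L. s'' \<le> s'} \<le> card ({a \<in> P. x \<le> a \<and> a < s} - {m})"
      using m \<open>finite P\<close> by simp
    also have "{a \<in> P. x \<le> a \<and> a < s} - {m} = {a \<in> P - {m}. x \<le> a \<and> a < s'}"
      using True \<open>s' < s\<close> max by force
    finally show ?thesis .
  next
    case False
    have "{s'' \<in> set L. s'' \<le> s'} = {s'' \<in> set (s # L). s'' \<le> s'}"
      using \<open>s' < s\<close> by auto
    also have "card \<dots> \<le> card {a \<in> P. x \<le> a \<and> a < s'}"
      using s' by (intro hall_at) simp
    also have "{a \<in> P. x \<le> a \<and> a < s'} = {a \<in> P - {m}. x \<le> a \<and> a < s'}"
      using False by auto
    finally show ?thesis .
  qed
qed

text \<open>Under Hall's condition every greedy choice is at least \<open>x\<close>, so elements of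
\<open>P\<close> below \<open>x\<close> are never picked.\<close>

lemma pick_eq_pick_above:
  assumes "sorted_wrt (>) L" "finite P" "hall_above x P L"
  shows "pick P L = pick {a \<in> P. x \<le> a} L"
  using assms
proof (induction L arbitrary: P)
  case Nil
  then show ?case by simp
next
  case (Cons s L)
  obtain a where a: "a \<in> P" "x \<le> a" "a < s"
    using hall_above_Cons_witness[OF Cons.prems(3)] .
  define m where "m = Max {t \<in> P. t < s}"
  have below_s: "{t \<in> P. t < s} \<noteq> {}" "finite {t \<in> P. t < s}"
    using a Cons.prems(2) by auto
  have m: "m \<in> P" "m < s" and max: "\<forall>t \<in> P. t < s \<longrightarrow> t \<le> m"
    using Max_in[OF below_s(2,1)] Max_ge[OF below_s(2)] by (auto simp: m_def)
  have "x \<le> m"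
    using a max by force
  have above_s: "{t \<in> {a \<in> P. x \<le> a}. t < s} \<noteq> {}"
    using a by auto
  have "Max {t \<in> {a \<in> P. x \<le> a}. t < s} = m"
    using m max \<open>x \<le> m\<close> Cons.prems(2) by (intro Max_eqI) auto
  then have "pick {a \<in> P. x \<le> a} (s # L) = insert m (pick ({a \<in> P. x \<le> a} - {m}) L)"
    using pick_Cons_nonempty[OF above_s] by simp
  moreover have "pick P (s # L) = insert m (pick (P - {m}) L)"
    using pick_Cons_nonempty[OF below_s(1)] by (simp add: m_def)
  moreover have "pick (P - {m}) L = pick {a \<in> P - {m}. x \<le> a} L"
    using Cons.prems m \<open>x \<le> m\<close> max
    by (intro Cons.IH hall_above_remove_max[of s L]) auto
  moreover have "{a \<in> P - {m}. x \<le> a} = {a \<in> P. x \<le> a} - {m}"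
    by auto
  ultimately show ?case
    by simp
qed

lemma tri_subset: "finite T \<Longrightarrow> T \<triangleleft> S \<subseteq> T"
  unfolding tri_def by (rule pick_subset)

lemma hall_above_if_dominated:
  assumes "finite S" "finite T" "{t \<in> T. t \<ge> x} \<preceq> S"
  shows "hall_above x T (rev (sorted_list_of_set S))"
  unfolding hall_above_def
proof
  fix s assume "s \<in> set (rev (sorted_list_of_set S))"
  then have "s \<in> S"
    using assms(1) by simp
  have "card {s' \<in> S. s' \<le> s} \<le> card {t \<in> {t \<in> T. t \<ge> x}. t < s}"
    using dominated_card_le[OF assms(1) _ assms(3) \<open>s \<in> S\<close>] assms(2) by simp
  then show "card {s' \<in> set (rev (sorted_list_of_set S)). s' \<le> s} \<le> card {a \<in> T. x \<le> a \<and> a < s}"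
    using assms(1) by simp
qed

lemma sorted_list_of_set_split:
  fixes S :: "'a::linorder set"
  assumes "finite S"
  shows "sorted_list_of_set S = sorted_list_of_set {s \<in> S. s \<le> x} @ sorted_list_of_set {s \<in> S. s > x}"
proof -
  let ?l = "sorted_list_of_set {s \<in> S. s \<le> x} @ sorted_list_of_set {s \<in> S. s > x}"
  have "sorted_wrt (<) ?l" "set ?l = S" "distinct ?l"
    using assms by (auto simp: sorted_wrt_append)
  then show ?thesis
    by (metis sorted_list_of_set.idem_if_sorted_distinct strict_sorted_iff)
qed

lemma tri_split:
  assumes "finite S" "finite T" "{t \<in> T. t \<ge> x} \<preceq> {s \<in> S. s > x}"
  shows "T \<triangleleft> S = ({t \<in> T. t < x} \<triangleleft> {s \<in> S. s \<le> x}) \<union> ({t \<in> T. t \<ge> x} \<triangleleft> {s \<in> S. s > x})"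
proof -
  define L where "L = rev (sorted_list_of_set {s \<in> S. s > x})"
  define M where "M = rev (sorted_list_of_set {s \<in> S. s \<le> x})"
  have upper: "pick T L = pick {t \<in> T. t \<ge> x} L"
    unfolding L_def using assms
    by (intro pick_eq_pick_above hall_above_if_dominated) (auto simp: sorted_wrt_rev)
  have "pick {t \<in> T. t \<ge> x} L \<subseteq> {t \<in> T. t \<ge> x}"
    using assms(2) by (intro pick_subset) simp
  then have "{t \<in> T - pick {t \<in> T. t \<ge> x} L. t < x} = {t \<in> T. t < x}"
    by auto
  moreover have "\<forall>s \<in> set M. s \<le> x"
    using assms(1) by (simp add: M_def)
  ultimately have lower: "pick (T - pick {t \<in> T. t \<ge> x} L) M = pick {t \<in> T. t < x} M"
    using pick_restrict_below by metis
  have "rev (sorted_list_of_set S) = L @ M"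
    using sorted_list_of_set_split[OF assms(1), of x] by (simp add: L_def M_def)
  then have "T \<triangleleft> S = pick T L \<union> pick (T - pick T L) M"
    unfolding tri_def by (simp only: pick_append)
  also have "\<dots> = pick {t \<in> T. t < x} M \<union> pick {t \<in> T. t \<ge> x} L"
    unfolding upper lower by (rule Un_commute)
  finally show ?thesis
    by (simp only: tri_def L_def M_def)
qed

theorem proposition4p12:
  fixes S T :: "int set" and x :: int
  assumes "finite S" "finite T" "\<forall>s\<in>S. s > 0" "\<forall>t\<in>T. t > 0"
    and "{t \<in> T. t \<ge> x} \<preceq> {s \<in> S. s > x}"
  shows "T \<triangleleft> S = ({t \<in> T. t < x} \<triangleleft> {s \<in> S. s \<le> x}) \<union> ({t \<in> T. t \<ge> x} \<triangleleft> {s \<in> S. s > x})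
     \<and> ({t \<in> T. t < x} \<triangleleft> {s \<in> S. s \<le> x}) \<inter> ({t \<in> T. t \<ge> x} \<triangleleft> {s \<in> S. s > x}) = {}"
proof
  show "T \<triangleleft> S = ({t \<in> T. t < x} \<triangleleft> {s \<in> S. s \<le> x}) \<union> ({t \<in> T. t \<ge> x} \<triangleleft> {s \<in> S. s > x})"
    using tri_split assms(1,2,5) .
  have "{t \<in> T. t < x} \<triangleleft> {s \<in> S. s \<le> x} \<subseteq> {t \<in> T. t < x}"
    and "{t \<in> T. t \<ge> x} \<triangleleft> {s \<in> S. s > x} \<subseteq> {t \<in> T. t \<ge> x}"
    using assms(2) by (simp_all add: tri_subset)
  moreover have "{t \<in> T. t < x} \<inter> {t \<in> T. t \<ge> x} = {}"
    by auto
  ultimately show "({t \<in> T. t < x} \<triangleleft> {s \<in> S. s \<le> x}) \<inter> ({t \<in> T. t \<ge> x} \<triangleleft> {s \<in> S. s > x}) = {}"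
    by blast
qed

end
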